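(* There exists a positive constant $C$ such that for all integers $n, m, k, r$ with $2 \leq k \leq m \leq n$ and $r \geq 2$, \[ \binom{n}{m} \binom{m-1}{k-1} \frac{m!}{\Gamma(m/k)^k} \left(\frac{m}{kn}\right)^{mr} \leq C \cdot \min\{m^k, 2^m\} \cdot \left(\frac{1.2}{k^{r-1}}\right)^m . \]
   Context: $\Gamma$ denotes the Gamma function. *)

theory Defs
  imports "HOL-Analysis.Analysis"
begin

end

theory Submission
  imports Defs
begin

text \<open>
  Multiplying the left-hand side by \<open>k^((r-1)m)\<close> splits it into two factors.
  The first, \<open>C(n,m) (m/n)^(mr)\<close>, is at most \<open>e^(0.18 m)\<close>: with \<open>p = m/n\<close> the binomial
  term \<open>C(n,m) p^m (1-p)^(n-m)\<close> is at most 1, which leaves \<open>p^m/(1-p)^(n-m)\<close>, an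
  exponential in \<open>m\<close> whose rate is maximised over \<open>n/m\<close>.
  The second, \<open>C(m-1,k-1) m!/(\<Gamma>(m/k)^k k^m)\<close>, is by Stirling-type bounds for \<open>m!\<close> and
  (via log-convexity) for \<open>\<Gamma>\<close> essentially \<open>C(m-1,k-1) \<surd>m (m/(2\<pi>k))^(k/2)\<close>.
  Bounding the binomial coefficient by \<open>m^k/k!\<close> gives \<open>O(m^k e^(\<epsilon>m))\<close>; bounding it via
  \<open>C(m,k) (2/5)^k (3/5)^(m-k) \<le> 1\<close> gives \<open>O((5/3 e^(9/56+\<epsilon>))^m)\<close>.
  The theorem follows because \<open>0.18 + \<epsilon> < ln 1.2\<close> and \<open>0.18 + ln(5/3) + 9/56 + \<epsilon> < ln 2.4\<close>;
  the margins are small, so the logarithms involved are pinned down numerically through the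
  series of \<open>ln ((1+u)/(1-u))\<close>.
\<close>

lemma ln_one_plus_div_one_minus_ge:
  fixes u :: real assumes "0 \<le> u" "u < 1"
  shows "2*u + 2*u^3/3 + 2*u^5/5 \<le> ln ((1+u) / (1-u))"
proof -
  let ?f = "\<lambda>t::real. ln (1+t) - ln (1-t) - (2*t + 2*t^3/3 + 2*t^5/5)"
  have "?f 0 \<le> ?f u"
  proof (rule DERIV_nonneg_imp_nondecreasing[OF assms(1)])
    fix t :: real assume t: "0 \<le> t" "t \<le> u"
    hence t1: "t < 1" using assms by simp
    have nz: "1 - t^2 > 0" using t t1 by (simp add: abs_square_less_1)
    have "DERIV ?f t :> (1/(1+t) + 1/(1-t) - (2 + 2*t^2 + 2*t^4))"
      using t t1 by - (rule derivative_eq_intros refl | simp)+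
    moreover have "1/(1+t) + 1/(1-t) - (2 + 2*t^2 + 2*t^4) = 2*t^6/(1-t^2)"
      using t t1 nz by (simp add: field_simps) (simp add: algebra_simps eval_nat_numeral)
    moreover have "2*t^6/(1-t^2) \<ge> 0" using nz by simp
    ultimately show "\<exists>y. DERIV ?f t :> y \<and> 0 \<le> y" by auto
  qed
  with assms show ?thesis by (simp add: ln_div)
qed

lemma ln_one_plus_div_one_minus_le:
  fixes u :: real assumes "0 \<le> u" "u < 1"
  shows "ln ((1+u) / (1-u)) \<le> 2*u + 2*u^3/(3*(1-u^2))"
proof -
  let ?f = "\<lambda>t::real. 2*t + (2/3)*(t^3/(1-t^2)) - (ln (1+t) - ln (1-t))"
  have "?f 0 \<le> ?f u"
  proof (rule DERIV_nonneg_imp_nondecreasing[OF assms(1)])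
    fix t :: real assume t: "0 \<le> t" "t \<le> u"
    hence t1: "t < 1" using assms by simp
    have nz: "1 - t^2 > 0" using t t1 by (simp add: abs_square_less_1)
    have "DERIV ?f t :> (2 + (2/3)*((3*t^2*(1-t^2) + t^3*(2*t))/(1-t^2)^2) - (1/(1+t) + 1/(1-t)))"
      using t t1 nz by - (rule derivative_eq_intros refl | simp add: power2_eq_square)+
    moreover have "1/(1+t) + 1/(1-t) = 2/(1-t^2)"
      using t t1 nz by (simp add: field_simps power2_eq_square)
    moreover have "2 + (2/3)*((3*t^2*(1-t^2) + t^3*(2*t))/(1-t^2)^2) - 2/(1-t^2) = (4/3)*t^4/(1-t^2)^2"
    proof -
      have e: "3*t^2*(1-t^2) + t^3*(2*t) = 3*t^2 - t^4" by (simp add: algebra_simps eval_nat_numeral)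
      have g: "\<And>D a::real. D \<noteq> 0 \<Longrightarrow> 2 + (2/3)*(a/D^2) - 2/D = (2*D^2 + (2/3)*a - 2*D)/D^2"
        by (simp add: field_simps power2_eq_square)
      have h: "2*(1-t^2)^2 + (2/3)*(3*t^2 - t^4) - 2*(1-t^2) = (4/3)*t^4"
        by (simp add: algebra_simps eval_nat_numeral)
      show ?thesis using nz unfolding e g[of "1-t^2" "3*t^2 - t^4", OF nz[THEN less_imp_neq, symmetric], unfolded h]
        by simp
    qed
    ultimately show "\<exists>y. DERIV ?f t :> y \<and> 0 \<le> y" by auto
  qed
  with assms show ?thesis by (simp add: ln_div)
qed

lemma ln_fraction_bounds:
  "28768/100000 \<le> ln (4/3::real)" "ln (4/3::real) \<le> 28770/100000"
  "40546/100000 \<le> ln (3/2::real)" "ln (3/2::real) \<le> 40556/100000"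
  "22314/100000 \<le> ln (5/4::real)" "18232/100000 \<le> ln (6/5::real)"
  using ln_one_plus_div_one_minus_ge[of "1/7"] ln_one_plus_div_one_minus_le[of "1/7"]
    ln_one_plus_div_one_minus_ge[of "1/5"] ln_one_plus_div_one_minus_le[of "1/5"]
    ln_one_plus_div_one_minus_ge[of "1/9"] ln_one_plus_div_one_minus_ge[of "1/11"]
  by (simp_all add: power_divide)

lemma ln_le_tangent_line:
  fixes x c :: real assumes "0 < x" "0 < c"
  shows "ln x \<le> x / c + ln c - 1"
  using ln_le_minus_one[of "x / c"] assms by (simp add: ln_div)

lemma ln_le_imp_le_exp: "0 < (y::real) \<Longrightarrow> ln y \<le> t \<Longrightarrow> y \<le> exp t"
  by (metis exp_le_cancel_iff exp_ln)

lemma exp_of_nat_mult_ln: "0 < (y::real) \<Longrightarrow> exp (real j * ln y) = y ^ j"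
  by (simp add: ln_realpow[symmetric])

lemma mult_ln_minus_mult_ln_add_one_tangent:
  fixes x y :: real assumes "x \<in> {0<..<1}" "y \<in> {0<..<1}"
  shows "(ln x + 1 - ln (1+x) - (x-1)/(1+x)) * (y - x)
    \<le> (y * ln y - (y-1) * ln (1+y)) - (x * ln x - (x-1) * ln (1+x))"
proof (rule f''_imp_f'[of "{0<..<1}" _ _ "\<lambda>z. 1/z - 1/(1+z) - 2/(1+z)^2"])
  fix z :: real assume z: "z \<in> {0<..<1}"
  show "((\<lambda>s. s * ln s - (s-1) * ln (1+s)) has_real_derivative ln z + 1 - ln (1+z) - (z-1)/(1+z)) (at z)"
    using z by - (rule derivative_eq_intros refl | simp add: field_simps)+
  show "((\<lambda>s. ln s + 1 - ln (1+s) - (s-1)/(1+s)) has_real_derivative 1/z - 1/(1+z) - 2/(1+z)^2) (at z)"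
    using z by - (rule derivative_eq_intros refl | simp add: field_simps power2_eq_square)+
  have "1/a - 1/b - 2/b^2 = (b^2 - a*b - 2*a) / (a*b^2)" if "a \<noteq> 0" "b \<noteq> 0" for a b :: real
    using that by (simp add: field_simps power2_eq_square)
  from this[of z "1+z"] z have "1/z - 1/(1+z) - 2/(1+z)^2 = ((1+z)^2 - z*(1+z) - 2*z) / (z * (1+z)^2)"
    by simp
  also have "(1+z)^2 - z*(1+z) - 2*z = 1 - z" by (simp add: algebra_simps power2_eq_square)
  finally show "0 \<le> 1/z - 1/(1+z) - 2/(1+z)^2" using z by simp
qed (use assms in auto)

lemma sub_one_mult_ln_add_one_le:
  fixes s :: real assumes s: "0 < s"
  shows "(s-1) * ln (1+s) - s * ln s \<le> 9/50"
proof (cases "1 \<le> s")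
  case True
  have "ln (1+s) \<le> ln s + 1/s" "1 - 1/s \<le> ln s"
    using ln_le_tangent_line[of "1+s" s] ln_le_tangent_line[of 1 s] s by (simp_all add: field_simps)
  moreover have "(s-1) * ln (1+s) \<le> (s-1) * (ln s + 1/s)"
    using True \<open>ln (1+s) \<le> ln s + 1/s\<close> by (intro mult_left_mono) auto
  moreover have "(s-1) * (ln s + 1/s) = s * ln s - ln s + 1 - 1/s" using s by (simp add: field_simps)
  ultimately show ?thesis by linarith
next
  case False
  text \<open>On \<open>(0,1)\<close> the negated function is convex; its tangents at \<open>1/4\<close> and \<open>1/3\<close>
    bound it from below on \<open>(0, 29/100]\<close> and \<open>[29/100, 1)\<close> respectively.\<close>
  note tangent = mult_ln_minus_mult_ln_add_one_tangent
  note N = ln_fraction_bounds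
  have l2: "ln 2 = ln (4/3) + ln (3/2::real)" using ln_mult[of "4/3" "3/2::real"] by simp
  have l3: "ln 3 = ln 2 + ln (3/2::real)" using ln_mult[of 2 "3/2::real"] by simp
  have l4: "ln 4 = 2 * ln (2::real)" using ln_realpow[of 2 2] by simp
  show ?thesis
  proof (cases "s \<le> 29/100")
    case True
    define c :: real where "c = ln 4 + ln (5/4) - 8/5"
    have "- (c * (s - 1/4)) \<le> (s * ln s - (s-1) * ln (1+s)) - ((3/4) * ln (5/4) - (1/4) * ln 4)"
      using tangent[of "1/4" s] s \<open>\<not> 1 \<le> s\<close> by (simp add: ln_div c_def algebra_simps)
    moreover have "c * (s - 1/4) \<le> c * (1/25)"
      unfolding c_def using True N l2 l4 by (intro mult_left_mono) auto
    ultimately show ?thesis using c_def N l2 l4 by linarith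
  next
    case False
    define c :: real where "c = ln 3 + ln (4/3) - 3/2"
    have "- (c * (s - 1/3)) \<le> (s * ln s - (s-1) * ln (1+s)) - ((2/3) * ln (4/3) - (1/3) * ln 3)"
      using tangent[of "1/3" s] s \<open>\<not> 1 \<le> s\<close> by (simp add: ln_div c_def algebra_simps)
    moreover have "c * (s - 1/3) \<le> c * (- 13/300)"
      unfolding c_def using False N l2 l3 by (intro mult_left_mono_neg) auto
    ultimately show ?thesis using c_def N l2 l3 by linarith
  qed
qed

lemma ln_fact_upper:
  assumes "1 \<le> n"
  shows "ln (fact n :: real) \<le> 1 + ln (real n) + real n * ln (real n) - real n"
  using assms
proof (induction n rule: nat_induct_at_least)
  case base then show ?case by simp
next
  case (Suc n)
  have n: "real n \<ge> 1" using Suc by simp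
  have "ln (real n / (real n + 1)) \<le> real n / (real n + 1) - 1"
    using n by (intro ln_le_minus_one) simp
  then have "(real n + 1) * (ln (real n) - ln (real n + 1)) \<le> (real n + 1) * (- 1/(real n + 1))"
    using n by (intro mult_left_mono) (simp_all add: ln_div field_simps)
  then have "real n * ln (real n) + ln (real n) + 1 \<le> real n * ln (real n + 1) + ln (real n + 1)"
    using n by (simp add: algebra_simps)
  moreover have "ln (fact (Suc n) :: real) = ln (real n + 1) + ln (fact n)"
    by (simp add: ln_mult add.commute)
  ultimately show ?case using Suc.IH by (simp add: algebra_simps)
qed

lemma ln_Suc_minus_ln_le:
  assumes "1 \<le> n"
  shows "(real n + 1/2) * (ln (real n + 1) - ln (real n)) \<le> 1 + 1/(12*real n) - 1/(12*(real n + 1))"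
proof -
  have n: "real n \<ge> 1" using assms by simp
  define a where "a = 2 * real n + 1"
  have a: "a > 1" and a2: "a^2 - 1 = 4 * real n * (real n + 1)"
    unfolding a_def using n by (auto simp: algebra_simps power2_eq_square)
  have u: "0 \<le> 1/a" "1/a < 1" using a by simp_all
  have "1 + 1/a = 2 * (real n + 1) / a" and "1 - 1/a = 2 * real n / a"
    using a unfolding a_def by (simp_all add: field_simps)
  with a n have "(1 + 1/a) / (1 - 1/a) = (real n + 1) / real n"
    by simp (simp add: field_simps)
  moreover have "2*(1/a) + 2*(1/a)^3/(3*(1-(1/a)^2)) = 2/a + 2/(3*a*(a^2-1))"
  proof -
    have "a^2 - 1 \<noteq> 0" using a2 n by simp
    with a show ?thesis by (simp add: field_simps power2_eq_square eval_nat_numeral)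
  qed
  ultimately have "ln (real n + 1) - ln (real n) \<le> 2/a + 2/(3*a*(a^2-1))"
    using ln_one_plus_div_one_minus_le[OF u] n by (simp add: ln_div)
  moreover have half: "real n + 1/2 = a/2" unfolding a_def by simp
  ultimately have "(real n + 1/2) * (ln (real n + 1) - ln (real n)) \<le> (a/2) * (2/a + 2/(3*a*(a^2-1)))"
    unfolding half using a by (intro mult_left_mono) auto
  also have "\<dots> = 1 + 1/(12 * (real n * (real n + 1)))"
  proof -
    have "(a/2) * (2/a + 2/(3*a*(4*N))) = 1 + 1/(12*N)" if "N \<noteq> 0" for N
      using that a by (simp add: field_simps)
    from this[of "real n * (real n + 1)"] n show ?thesis unfolding a2 by (simp add: mult.assoc)
  qed
  also have "\<dots> = 1 + 1/(12*real n) - 1/(12*(real n + 1))"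
  proof -
    have "1/(12*N) - 1/(12*(N+1)) = 1/(12*(N*(N+1)))" if "N > 0" for N :: real
      using that by (simp add: field_simps)
    with n show ?thesis by simp
  qed
  finally show ?thesis .
qed

lemma ln_fact_lower:
  assumes "1 \<le> n"
  shows "11/12 + ln (real n)/2 + real n * ln (real n) - real n + 1/(12*real n) \<le> ln (fact n :: real)"
  using assms
proof (induction n rule: nat_induct_at_least)
  case base then show ?case by simp
next
  case (Suc n)
  have "ln (fact (Suc n) :: real) = ln (real n + 1) + ln (fact n)"
    by (simp add: ln_mult add.commute)
  with Suc.IH ln_Suc_minus_ln_le[OF Suc.hyps] show ?case by (simp add: algebra_simps)
qed

lemma ln_Gamma_plus1:
  fixes x :: real assumes "0 < x"
  shows "ln (Gamma (x+1)) = ln x + ln (Gamma x)"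
proof -
  have "x \<notin> \<int>\<^sub>\<le>\<^sub>0" using assms by (auto elim!: nonpos_Ints_cases)
  then have "Gamma (x+1) = x * Gamma x" by (rule Gamma_plus1)
  moreover have "Gamma x > 0" using assms by (rule Gamma_real_pos)
  ultimately show ?thesis using assms by (simp del: Gamma_real_pos add: ln_mult)
qed

lemma ln_Gamma_plus1_lower:
  fixes x :: real assumes x: "1 \<le> x"
  shows "11/12 + ln (x/2)/2 + x * ln x - x \<le> ln (Gamma (x+1))"
proof -
  define q where "q = nat \<lfloor>x\<rfloor>"
  have q: "real q \<le> x" "x < real q + 1" "1 \<le> q" unfolding q_def using x by linarith+
  then have q1: "1 \<le> real q" and "0 \<le> 1 / (12 * real q)" by simp_all
  define b where "b = x - real q"
  have b: "0 \<le> b" "b < 1" unfolding b_def using q by auto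
  have "(ln \<circ> Gamma) ((1-b) *\<^sub>R (x+1) + b *\<^sub>R x) \<le> (1-b) * (ln \<circ> Gamma) (x+1) + b * (ln \<circ> Gamma) x"
    by (rule convex_onD[OF log_convex_Gamma_real]) (use b x in auto)
  moreover have "(1-b) *\<^sub>R (x+1) + b *\<^sub>R x = real q + 1" unfolding b_def by (simp add: algebra_simps)
  moreover have "Gamma (real q + 1) = fact q" using Gamma_fact[of q] by (simp add: add.commute)
  moreover have "ln (Gamma (x+1)) = ln x + ln (Gamma x)" using x by (simp add: ln_Gamma_plus1)
  ultimately have "ln (fact q) \<le> ln (Gamma (x+1)) - b * ln x"
    by (simp add: algebra_simps)
  moreover have "11/12 + ln (real q)/2 + real q * ln (real q) - real q \<le> ln (fact q)"
    using ln_fact_lower[OF q(3)] \<open>0 \<le> 1 / (12 * real q)\<close> by linarith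
  moreover have "ln (x/2) \<le> ln (real q)"
  proof -
    have "x/2 \<le> real q" using q q1 by linarith
    with x show ?thesis by simp
  qed
  moreover have "real q * (ln x - ln (real q)) \<le> b"
  proof -
    have "ln (x / real q) \<le> x / real q - 1" using q x by (intro ln_le_minus_one) simp
    then have "real q * (ln x - ln (real q)) \<le> real q * (x / real q - 1)"
      using q x by (intro mult_left_mono) (simp_all add: ln_div)
    moreover have "real q * (x / real q - 1) = b" unfolding b_def using q1 by (simp add: field_simps)
    ultimately show ?thesis by simp
  qed
  ultimately show ?thesis unfolding b_def by (simp add: algebra_simps)
qed

lemma binomial_term_le_one:
  fixes p :: real assumes "0 \<le> p" "p \<le> 1" "j \<le> n"
  shows "real (n choose j) * p^j * (1-p)^(n-j) \<le> 1"
proof -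
  have "real (n choose j) * p^j * (1-p)^(n-j) \<le> (\<Sum>i\<le>n. real (n choose i) * p^i * (1-p)^(n-i))"
    by (rule member_le_sum) (use assms in auto)
  also have "\<dots> = (p + (1-p))^n" by (rule binomial_ring[symmetric])
  finally show ?thesis by simp
qed

definition binomial_ratio_power :: "nat \<Rightarrow> nat \<Rightarrow> nat \<Rightarrow> real" where
  "binomial_ratio_power n m r = real (n choose m) * (real m / real n) ^ (m * r)"

definition binomial_Gamma_ratio :: "nat \<Rightarrow> nat \<Rightarrow> real" where
  "binomial_Gamma_ratio m k =
     real ((m - 1) choose (k - 1)) * (fact m / (Gamma (real m / real k) ^ k * real k ^ m))"

lemma binomial_ratio_power_le:
  assumes m: "1 \<le> m" and mn: "m \<le> n" and r: "2 \<le> r"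
  shows "binomial_ratio_power n m r \<le> exp (9/50) ^ m"
proof -
  define p where "p = real m / real n"
  have p: "0 < p" "p \<le> 1" unfolding p_def using m mn by auto
  have "real (n choose m) * p ^ (m*r) \<le> real (n choose m) * p ^ (2*m)"
    using r p by (intro mult_left_mono power_decreasing) auto
  also have "\<dots> \<le> exp (9/50) ^ m"
  proof (cases "m = n")
    case True
    then show ?thesis using m by (simp add: p_def)
  next
    case False
    then have mn': "m < n" using mn by simp
    then have p1: "p < 1" unfolding p_def by simp
    define s where "s = real (n-m) / real m"
    have s: "0 < s" unfolding s_def using mn' m by simp
    have "real (n choose m) * p ^ (2*m)
        = (real (n choose m) * p^m * (1-p)^(n-m)) * (p^m / (1-p)^(n-m))"
      using p1 unfolding mult_2 power_add by (simp add: field_simps)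
    also have "\<dots> \<le> p^m / (1-p)^(n-m)"
      using binomial_term_le_one[of p m n] p p1 mn by (intro mult_left_le_one_le) auto
    also have "\<dots> = exp (real m * ((s-1) * ln (1+s) - s * ln s))"
    proof -
      have "1 - p = real (n-m) / real n" "1 + s = real n / real m"
        unfolding p_def s_def using m mn by (simp_all add: field_simps of_nat_diff)
      then have "real m * ((s-1) * ln (1+s) - s * ln s) = real m * ln p - real (n-m) * ln (1-p)"
        unfolding p_def s_def using m mn' by (simp add: ln_div field_simps)
      then show ?thesis using p p1 by (simp add: exp_diff exp_of_nat_mult_ln)
    qed
    also have "\<dots> \<le> exp (real m * (9/50))"
      using sub_one_mult_ln_add_one_le[OF s] by (intro exp_mono mult_left_mono) auto
    also have "\<dots> = exp (9/50) ^ m" by (rule exp_of_nat_mult)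
    finally show ?thesis .
  qed
  finally show ?thesis unfolding p_def binomial_ratio_power_def .
qed

lemma ln_fact_minus_ln_Gamma_power_le:
  fixes m k :: nat assumes k: "1 \<le> k" and km: "k \<le> m"
  shows "ln (fact m) - real k * ln (Gamma (real m / real k)) - real m * ln (real k)
     \<le> 1 + ln (real m) + real k / 2 * (ln (real m / real k) - 11/6 + ln 2)"
proof -
  define x where "x = real m / real k"
  have m: "1 \<le> m" using k km by simp
  have x: "1 \<le> x" unfolding x_def using k km by simp
  have kx: "real k * x = real m" unfolding x_def using k by simp
  have "ln (Gamma (x+1)) = ln x + ln (Gamma x)" using x by (simp add: ln_Gamma_plus1)
  then have "11/12 + ln x/2 - ln 2/2 + x * ln x - x - ln x \<le> ln (Gamma x)"
    using ln_Gamma_plus1_lower[OF x] x by (simp add: ln_div field_simps)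
  then have "real k * (11/12 + ln x/2 - ln 2/2 + x * ln x - x - ln x) \<le> real k * ln (Gamma x)"
    by (intro mult_left_mono) auto
  moreover have "real k * (11/12 + ln x/2 - ln 2/2 + x * ln x - x - ln x)
      = 11/12 * real k + real k * ln x / 2 - real k * ln 2 / 2 + real m * ln x - real m - real k * ln x"
    using kx by (simp add: algebra_simps flip: mult.assoc)
  moreover have "ln (real m) = ln x + ln (real k)" unfolding x_def using k m by (simp add: ln_div)
  ultimately show ?thesis
    using ln_fact_upper[OF m] unfolding x_def[symmetric] by (simp add: algebra_simps)
qed

lemma mult_ln_div_cube_le:
  fixes k m c :: real assumes k: "0 < k" and m: "0 < m"
  shows "k/2 * (ln m - 3 * ln k + c) \<le> m/2000 + exp ((ln 1000 + c)/2)"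
proof -
  define B where "B = (ln 1000 + c)/2"
  have "k/2 * (ln m - ln 1000 - ln k) \<le> k/2 * (m / (1000 * k) - 1)"
    using ln_le_tangent_line[of m "1000 * k"] k m by (intro mult_left_mono) (simp_all add: ln_mult)
  moreover have "k * (B - ln k) \<le> k * (exp B / k - 1)"
    using ln_le_tangent_line[of "exp B" k] k by (intro mult_left_mono) simp_all
  moreover have "k/2 * (m / (1000 * k) - 1) = m/2000 - k/2" "k * (exp B / k - 1) = exp B - k"
    using k by (simp_all add: field_simps)
  moreover have "k/2 * (ln m - 3 * ln k + c) = k/2 * (ln m - ln 1000 - ln k) + k * (B - ln k)"
    unfolding B_def by (simp add: field_simps)
  ultimately show ?thesis unfolding B_def[symmetric] using k by linarith
qed

lemma exp_17_div_6_ge: "14 \<le> exp (17/6::real)"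
proof -
  have "(14::real) \<le> (1 + 17/192) ^ 32" by (simp add: power_divide)
  also have "\<dots> \<le> exp (17/192) ^ 32"
    by (rule power_mono) (use exp_ge_add_one_self[of "17/192::real"] in auto)
  also have "\<dots> = exp (17/6)" using exp_of_nat_mult[of 32 "17/192::real"] by simp
  finally show ?thesis .
qed

lemma ln_binomial_Gamma_ratio:
  assumes "1 \<le> k" "k \<le> m"
  shows "ln (binomial_Gamma_ratio m k) = ln (real ((m - 1) choose (k - 1)))
    + (ln (fact m) - real k * ln (Gamma (real m / real k)) - real m * ln (real k))"
proof -
  have "real ((m - 1) choose (k - 1)) > 0" "Gamma (real m / real k) > 0" "real k > 0"
    using assms by simp_all
  then show ?thesis unfolding binomial_Gamma_ratio_def by (simp add: ln_mult ln_div ln_realpow)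
qed

lemma binomial_Gamma_ratio_pos: "1 \<le> k \<Longrightarrow> k \<le> m \<Longrightarrow> 0 < binomial_Gamma_ratio m k"
  unfolding binomial_Gamma_ratio_def by simp

lemma ln_binomial_pred_le:
  assumes k: "1 \<le> k" and km: "k \<le> m"
  shows "ln (real ((m - 1) choose (k - 1))) \<le> real k * ln (real m) - ln (fact k) + ln (real k) - ln (real m)"
proof -
  have "real k * real (m choose k) = real m * real ((m - 1) choose (k - 1))"
    using binomial_absorption[of "k - 1" m] k by (simp flip: of_nat_mult)
  then have "ln (real k * real (m choose k)) = ln (real m * real ((m - 1) choose (k - 1)))"
    by simp
  then have "ln (real k) + ln (real (m choose k)) = ln (real m) + ln (real ((m - 1) choose (k - 1)))"
    using k km by (simp add: ln_mult)
  moreover have "real (m choose k) * fact k \<le> real m ^ k"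
    by (metis binomial_fact_pow of_nat_fact of_nat_le_iff of_nat_mult of_nat_power)
  then have "ln (real (m choose k)) + ln (fact k) \<le> real k * ln (real m)"
    using k km by (simp add: ln_mult ln_realpow flip: ln_le_cancel_iff)
  ultimately show ?thesis by linarith
qed

lemma ln_binomial_le:
  fixes p :: real assumes "0 < p" "p < 1" "k \<le> m"
  shows "ln (real (m choose k)) \<le> - real k * ln p - real (m - k) * ln (1 - p)"
proof -
  have "ln (real (m choose k) * p ^ k * (1 - p) ^ (m - k)) \<le> 0"
    using binomial_term_le_one[of p k m] assms by simp
  with assms show ?thesis by (simp add: ln_mult ln_realpow)
qed

lemma binomial_Gamma_ratio_le_power:
  "\<exists>c>0. \<forall>m k. 1 \<le> k \<and> k \<le> m \<longrightarrow> binomial_Gamma_ratio m k \<le> c * real m ^ k * exp (1/1000) ^ m"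
proof (intro exI conjI allI impI)
  define K :: real where "K = 2 + exp ((ln 1000 + (1/6 + ln 2))/2) + ln 2000"
  show "exp K > 0" by simp
  fix m k :: nat assume "1 \<le> k \<and> k \<le> m"
  then have k: "1 \<le> k" and km: "k \<le> m" by auto
  then have m: "real m > 0" and k_pos: "real k > 0" by simp_all
  have "real k / 2 * (ln (real m / real k) - 11/6 + ln 2)
      = real k / 2 * (ln (real m) - 3 * ln (real k) + (1/6 + ln 2)) + real k * ln (real k) - real k"
    using k m by (simp add: ln_div field_simps)
  moreover have "ln (real k) \<le> ln (real m)" "0 \<le> ln (real k)" "0 \<le> 1 / (12 * real k)"
    using k km by simp_all
  ultimately have "ln (binomial_Gamma_ratio m k) \<le> real k * ln (real m) + real m * (1/1000) + K"
    unfolding K_def ln_binomial_Gamma_ratio[OF k km]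
    using ln_binomial_pred_le[OF k km] ln_fact_minus_ln_Gamma_power_le[OF k km] ln_fact_lower[OF k]
      mult_ln_div_cube_le[OF k_pos m, of "1/6 + ln 2"] ln_le_tangent_line[of "real m" 2000] m
    by linarith
  then have "binomial_Gamma_ratio m k \<le> exp (real k * ln (real m) + real m * (1/1000) + K)"
    using binomial_Gamma_ratio_pos[OF k km] by (rule ln_le_imp_le_exp[rotated])
  also have "\<dots> = exp K * real m ^ k * exp (1/1000) ^ m"
    using m by (simp add: exp_add exp_of_nat_mult_ln flip: exp_of_nat_mult)
  finally show "binomial_Gamma_ratio m k \<le> exp K * real m ^ k * exp (1/1000) ^ m" .
qed

lemma mult_ln_div_le:
  fixes k m :: real assumes k: "0 < k" and m: "0 < m"
  shows "k/2 * (ln (m/k) - 11/6 + ln 2) \<le> m * (9/56) - k * ln (3/2)"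
proof -
  define a :: real where "a = ln (9/2) - 11/6"
  have "exp (a - 1) = (9/2) / exp (17/6)" unfolding a_def by (simp add: exp_diff)
  also have "\<dots> \<le> (9/2) / 14" using exp_17_div_6_ge by (intro divide_left_mono) auto
  finally have "(m/k) * exp (a - 1) \<le> (m/k) * (9/28)" using k m by (intro mult_left_mono) auto
  moreover have "(m/k) / exp (1 - a) = (m/k) * exp (a - 1)" by (simp add: exp_diff)
  then have "ln (m/k) + a \<le> (m/k) * exp (a - 1)"
    using ln_le_tangent_line[of "m/k" "exp (1 - a)"] k m by simp
  ultimately have "k/2 * (ln (m/k) + a) \<le> k/2 * ((m/k) * (9/28))"
    using k by (intro mult_left_mono) auto
  moreover have "ln (9/2) = ln 2 + 2 * ln (3/2::real)"
    using ln_mult[of 2 "9/4::real"] ln_realpow[of "3/2::real" 2] by (simp add: power_divide)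
  ultimately show ?thesis unfolding a_def using k by (simp add: field_simps)
qed

lemma binomial_Gamma_ratio_le_exp:
  "\<exists>c>0. \<forall>m k. 1 \<le> k \<and> k \<le> m \<longrightarrow> binomial_Gamma_ratio m k \<le> c * (5/3 * exp (9/56 + 1/1000)) ^ m"
proof (intro exI conjI allI impI)
  define K :: real where "K = ln 2000"
  show "exp K > 0" by simp
  fix m k :: nat assume "1 \<le> k \<and> k \<le> m"
  then have k: "1 \<le> k" and km: "k \<le> m" by auto
  then have m: "real m > 0" and k_pos: "real k > 0" by simp_all
  have "(m - 1) choose (k - 1) \<le> m choose k"
    using binomial_Suc_Suc[of "m - 1" "k - 1"] k km by simp
  then have "ln (real ((m - 1) choose (k - 1))) \<le> ln (real (m choose k))"
    using k km by simp
  also have "\<dots> \<le> - real k * ln (2/5) - real (m - k) * ln (3/5)"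
    using ln_binomial_le[of "2/5" k m] km by simp
  also have "\<dots> = real k * ln (3/2) + real m * ln (5/3)"
  proof -
    have "ln (2/5) = - ln (3/2) - ln (5/3::real)" "ln (3/5) = - ln (5/3::real)"
      by (simp_all add: ln_div)
    then show ?thesis using km by (simp only:) (simp add: algebra_simps)
  qed
  finally have "ln (real ((m - 1) choose (k - 1))) \<le> real k * ln (3/2) + real m * ln (5/3)" .
  then have "ln (binomial_Gamma_ratio m k) \<le> real m * (ln (5/3) + (9/56 + 1/1000)) + K"
    unfolding K_def ln_binomial_Gamma_ratio[OF k km]
    using ln_fact_minus_ln_Gamma_power_le[OF k km] mult_ln_div_le[OF k_pos m]
      ln_le_tangent_line[of "real m" 2000] m
    by (simp add: algebra_simps)
  then have "binomial_Gamma_ratio m k \<le> exp (real m * (ln (5/3) + (9/56 + 1/1000)) + K)"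
    using binomial_Gamma_ratio_pos[OF k km] by (rule ln_le_imp_le_exp[rotated])
  also have "\<dots> = exp K * (5/3 * exp (9/56 + 1/1000)) ^ m"
  proof -
    have "exp (real m * t + K) = exp K * exp t ^ m" for t :: real
      by (simp add: exp_add exp_of_nat_mult)
    moreover have "exp (ln (5/3) + (9/56 + 1/1000)) = 5/3 * exp (9/56 + 1/1000::real)"
      by (simp add: exp_add)
    ultimately show ?thesis by (simp only:)
  qed
  finally show "binomial_Gamma_ratio m k \<le> exp K * (5/3 * exp (9/56 + 1/1000)) ^ m" .
qed

lemma exp_growth_rates_le:
  "exp (9/50) * exp (1/1000) \<le> (6/5::real)"
  "exp (9/50) * (5/3 * exp (9/56 + 1/1000)) \<le> 2 * (6/5::real)"
proof -
  have "exp (9/50) * exp (1/1000) = exp (9/50 + 1/1000::real)" by (simp only: exp_add)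
  also have "\<dots> \<le> exp (ln (6/5))" using ln_fraction_bounds(6) by (simp only: exp_le_cancel_iff)
  finally show "exp (9/50) * exp (1/1000) \<le> (6/5::real)" by simp
  have "exp (9/50) * (5/3 * exp (9/56 + 1/1000)) = 5/3 * exp (9/50 + (9/56 + 1/1000::real))"
    by (simp only: exp_add ac_simps)
  also have "\<dots> \<le> 5/3 * exp (2 * ln (6/5))" using ln_fraction_bounds(6) by simp
  also have "\<dots> = 2 * (6/5)" by (simp add: exp_of_nat_mult[of 2, simplified] power2_eq_square)
  finally show "exp (9/50) * (5/3 * exp (9/56 + 1/1000)) \<le> 2 * (6/5::real)" .
qed

lemma binomial_ratio_power_mult_Gamma_ratio_le:
  "\<exists>c>0. \<forall>n m k r. 1 \<le> k \<and> k \<le> m \<and> m \<le> n \<and> 2 \<le> r \<longrightarrow>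
     binomial_ratio_power n m r * binomial_Gamma_ratio m k \<le> c * min (real m ^ k) (2 ^ m) * (6/5) ^ m"
proof -
  obtain c1 where c1: "c1 > 0"
    "\<forall>m k. 1 \<le> k \<and> k \<le> m \<longrightarrow> binomial_Gamma_ratio m k \<le> c1 * real m ^ k * exp (1/1000) ^ m"
    using binomial_Gamma_ratio_le_power by blast
  obtain c2 where c2: "c2 > 0"
    "\<forall>m k. 1 \<le> k \<and> k \<le> m \<longrightarrow> binomial_Gamma_ratio m k \<le> c2 * (5/3 * exp (9/56 + 1/1000)) ^ m"
    using binomial_Gamma_ratio_le_exp by blast
  show ?thesis
  proof (intro exI[of _ "max c1 c2"] conjI allI impI)
    show "max c1 c2 > 0" using c1 by simp
    fix n m k r :: nat assume "1 \<le> k \<and> k \<le> m \<and> m \<le> n \<and> 2 \<le> r"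
    then have k: "1 \<le> k" and km: "k \<le> m" and mn: "m \<le> n" and r: "2 \<le> r" by auto
    define A where "A = binomial_ratio_power n m r"
    define Q where "Q = binomial_Gamma_ratio m k"
    have A: "0 \<le> A" "A \<le> exp (9/50) ^ m"
      unfolding A_def using binomial_ratio_power_le[of m n r] k km mn r by (auto simp: binomial_ratio_power_def)
    have Q: "0 \<le> Q" "Q \<le> c1 * real m ^ k * exp (1/1000) ^ m"
      "Q \<le> c2 * (5/3 * exp (9/56 + 1/1000)) ^ m"
      unfolding Q_def using c1(2) c2(2) binomial_Gamma_ratio_pos[OF k km] k km by auto
    have "A * Q \<le> exp (9/50) ^ m * (c1 * real m ^ k * exp (1/1000) ^ m)"
      using A Q by (rule_tac mult_mono) auto
    also have "\<dots> = c1 * real m ^ k * (exp (9/50) * exp (1/1000)) ^ m"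
      by (simp add: power_mult_distrib)
    also have "\<dots> \<le> max c1 c2 * real m ^ k * (6/5) ^ m"
      using c1(1) exp_growth_rates_le(1)
      by (intro mult_mono[OF mult_right_mono[OF max.cobounded1] power_mono]) auto
    finally have AQ1: "A * Q \<le> max c1 c2 * real m ^ k * (6/5) ^ m" .
    have "A * Q \<le> exp (9/50) ^ m * (c2 * (5/3 * exp (9/56 + 1/1000)) ^ m)"
      using A Q by (rule_tac mult_mono) auto
    also have "\<dots> = c2 * (exp (9/50) * (5/3 * exp (9/56 + 1/1000))) ^ m"
      by (simp only: power_mult_distrib ac_simps)
    also have "\<dots> \<le> max c1 c2 * (2 * (6/5)) ^ m"
      using c2(1) exp_growth_rates_le(2) by (intro mult_mono[OF max.cobounded2 power_mono]) auto
    also have "\<dots> = max c1 c2 * 2 ^ m * (6/5) ^ m"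
      by (simp only: power_mult_distrib mult.assoc)
    finally have AQ2: "A * Q \<le> max c1 c2 * 2 ^ m * (6/5) ^ m" .
    from AQ1 AQ2 show "A * Q \<le> max c1 c2 * min (real m ^ k) (2 ^ m) * (6/5) ^ m"
      by (simp add: min_def)
  qed
qed

theorem lemma2:
  shows "\<exists>C::real. C > 0 \<and>
    (\<forall>n m k r :: nat. 2 \<le> k \<and> k \<le> m \<and> m \<le> n \<and> 2 \<le> r \<longrightarrow>
      real (n choose m) * real ((m - 1) choose (k - 1)) *
        (fact m / Gamma (real m / real k) ^ k) *
        (real m / (real k * real n)) ^ (m * r)
      \<le> C * min (real m ^ k) (2 ^ m) * ((6/5) / real k ^ (r - 1)) ^ m)"
proof -
  obtain C where C: "C > 0" "\<forall>n m k r. 1 \<le> k \<and> k \<le> m \<and> m \<le> n \<and> 2 \<le> r \<longrightarrow>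
     binomial_ratio_power n m r * binomial_Gamma_ratio m k \<le> C * min (real m ^ k) (2 ^ m) * (6/5) ^ m"
    using binomial_ratio_power_mult_Gamma_ratio_le by blast
  show ?thesis
  proof (intro exI[of _ C] conjI allI impI)
    fix n m k r :: nat assume nmkr: "2 \<le> k \<and> k \<le> m \<and> m \<le> n \<and> 2 \<le> r"
    then have k: "0 < k" and mr: "m * r = m + (r - 1) * m" by (auto simp: algebra_simps)
    have "real (n choose m) * real ((m - 1) choose (k - 1)) *
        (fact m / Gamma (real m / real k) ^ k) * (real m / (real k * real n)) ^ (m * r)
      = binomial_ratio_power n m r * binomial_Gamma_ratio m k / real k ^ ((r - 1) * m)"
      unfolding binomial_ratio_power_def binomial_Gamma_ratio_def
      using k nmkr by (subst (1 2) mr) (simp add: power_divide power_mult_distrib power_add field_simps)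
    also have "\<dots> \<le> C * min (real m ^ k) (2 ^ m) * (6/5) ^ m / real k ^ ((r - 1) * m)"
      using C(2) nmkr by (intro divide_right_mono) auto
    also have "\<dots> = C * min (real m ^ k) (2 ^ m) * ((6/5) / real k ^ (r - 1)) ^ m"
      by (simp add: power_divide power_mult)
    finally show "real (n choose m) * real ((m - 1) choose (k - 1)) *
        (fact m / Gamma (real m / real k) ^ k) * (real m / (real k * real n)) ^ (m * r)
      \<le> C * min (real m ^ k) (2 ^ m) * ((6/5) / real k ^ (r - 1)) ^ m" .
  qed (use C in simp)
qed

end
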